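(* Let $l$ and $m$ be positive integers and let $q(x)=x^6-(l+m+3)x^4+(lm+l+m+3)x^2-1$. Suppose $\pm\theta_1,\pm\theta_2,\pm\theta_3$ are the six roots of $q(x)$ in its splitting field over $\mathbb{Q}$. If $q(x)$ is reducible over $\mathbb{Q}$, then $1,\theta_1,\theta_2$ are linearly independent over $\mathbb{Q}$.
   Context: The roots of $q$ are simple, nonzero and real, and come in pairs $\pm\theta_j$; the labeling means the six roots are $\theta_1,-\theta_1,\theta_2,-\theta_2,\theta_3,-\theta_3$. *)

theory Defs
  imports "HOL-Computational_Algebra.Computational_Algebra"
begin

definition q_poly :: "int \<Rightarrow> int \<Rightarrow> rat poly" where
  "q_poly l m = [:-1, 0, of_int (l*m + l + m + 3), 0, - of_int (l + m + 3), 0, 1:]"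

end

theory Submission
  imports Defs "HOL-Computational_Algebra.Field_as_Ring"
begin

(* Write q(x) = p(x^2) with p(y) = y^3 - (l+m+3) y^2 + (lm+l+m+3) y - 1. A rational root of p
   would be an integer dividing 1, and p(1) = lm, p(-1) < 0; so the cubic p is irreducible and
   no root of q satisfies a nonzero rational relation of degree < 3. Hence a reducible q is a
   product g h of two cubics. Suppose theta2 = alpha + beta theta1 with g(theta1) = 0. Whichever
   cubic e vanishes at theta2 satisfies e(alpha + beta z) = c g(z), since the difference has degree
   < 3 and vanishes at theta1. If e = g, the rational fixed point of z -> alpha + beta z (for
   beta <> 1) or translation invariance (for beta = 1) forces alpha = 0, beta = 1; the same applies
   to -theta2. Otherwise h vanishes at both theta2 and -theta2, and comparing h(alpha + beta z) with
   h(-alpha - beta z) at z = -alpha/beta gives h(0) = 0, contradicting q(0) = -1. So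
   theta2 = +-theta1, which is impossible because q has six distinct roots: p has three positive
   roots by the intermediate value theorem. *)

lemma map_poly_of_rat_add:
  "map_poly (of_rat :: rat \<Rightarrow> 'a::field_char_0) (p + q) = map_poly of_rat p + map_poly of_rat q"
  by (rule poly_eqI) (simp add: coeff_map_poly of_rat_add)

lemma map_poly_of_rat_diff:
  "map_poly (of_rat :: rat \<Rightarrow> 'a::field_char_0) (p - q) = map_poly of_rat p - map_poly of_rat q"
  by (rule poly_eqI) (simp add: coeff_map_poly of_rat_diff)

lemma map_poly_of_rat_mult:
  "map_poly (of_rat :: rat \<Rightarrow> 'a::field_char_0) (p * q) = map_poly of_rat p * map_poly of_rat q"
  by (rule poly_eqI) (simp add: coeff_map_poly coeff_mult of_rat_sum of_rat_mult)

lemma map_poly_of_rat_smult: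
  "map_poly (of_rat :: rat \<Rightarrow> 'a::field_char_0) (smult c p) = smult (of_rat c) (map_poly of_rat p)"
  by (rule map_poly_smult) (simp_all add: of_rat_mult)

lemma map_poly_of_rat_pcompose:
  "map_poly (of_rat :: rat \<Rightarrow> 'a::field_char_0) (pcompose p q) =
     pcompose (map_poly of_rat p) (map_poly of_rat q)"
  by (induction p)
     (simp_all add: pcompose_pCons map_poly_pCons map_poly_of_rat_add map_poly_of_rat_mult)

definition rat_degree_ge :: "nat \<Rightarrow> 'a::field_char_0 \<Rightarrow> bool" where
  "rat_degree_ge n t \<longleftrightarrow> (\<forall>r. poly (map_poly of_rat r) t = 0 \<longrightarrow> degree r < n \<longrightarrow> r = 0)"

lemma rat_degree_geD:
  "rat_degree_ge n t \<Longrightarrow> poly (map_poly of_rat r) t = 0 \<Longrightarrow> degree r < n \<Longrightarrow> r = 0"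
  unfolding rat_degree_ge_def by blast

lemma rat_degree_ge_not_rational:
  assumes "rat_degree_ge n t" "1 < n"
  shows "t \<noteq> of_rat x"
proof
  assume "t = of_rat x"
  then have "poly (map_poly of_rat [:-x, 1:]) t = 0"
    by (simp add: map_poly_pCons of_rat_minus)
  with assms show False
    using rat_degree_geD[of n t "[:-x, 1:]"] by simp
qed

lemma degree_le_of_irreducible_common_root:
  fixes p r :: "rat poly" and t :: "'a::field_char_0"
  assumes "irreducible p" "poly (map_poly of_rat p) t = 0"
    and "poly (map_poly of_rat r) t = 0" "r \<noteq> 0"
  shows "degree p \<le> degree r"
proof (rule ccontr)
  assume "\<not> degree p \<le> degree r"
  then have "\<not> p dvd r"
    using dvd_imp_degree_le \<open>r \<noteq> 0\<close> by blast
  with field_poly_irreducible_imp_prime[OF assms(1)] have "coprime p r"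
    by (rule prime_elem_imp_coprime)
  then obtain u v where "u * p + v * r = 1"
    using bezout_coefficients_fst_snd[of p r] by (metis coprime_imp_gcd_eq_1)
  then have "poly (map_poly (of_rat :: rat \<Rightarrow> 'a) (u * p + v * r)) t = 1"
    by simp
  with assms(2,3) show False
    by (simp add: map_poly_of_rat_add map_poly_of_rat_mult)
qed

lemma rat_degree_ge_root_of_irreducible:
  assumes "irreducible p" "poly (map_poly of_rat p) t = 0"
  shows "rat_degree_ge (degree p) t"
  unfolding rat_degree_ge_def
  using degree_le_of_irreducible_common_root[OF assms] by (meson leD)

lemma root_of_degree_one:
  fixes c :: "'a::field poly"
  assumes "degree c = 1"
  shows "poly c (- coeff c 0 / coeff c 1) = 0"
proof -
  have c: "c = [:coeff c 0, coeff c 1:]"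
    using assms by (intro poly_eqI) (auto simp: coeff_pCons coeff_eq_0 split: nat.split)
  have "coeff c 1 \<noteq> 0"
    using assms leading_coeff_neq_0[of c] by fastforce
  then show ?thesis
    by (subst c) simp
qed

lemma irreducible_cubic_if_no_root:
  fixes p :: "'a::field poly"
  assumes "degree p = 3" "\<And>x. poly p x \<noteq> 0"
  shows "irreducible p"
proof (rule irreducibleI)
  show "p \<noteq> 0"
    using assms(1) by auto
  then show "\<not> is_unit p"
    using assms(1) is_unit_iff_degree[of p] by simp
next
  fix a b assume ab: "p = a * b"
  with assms(1) have "a \<noteq> 0" "b \<noteq> 0"
    by auto
  with ab \<open>degree p = 3\<close> have "degree a + degree b = 3"
    by (simp add: degree_mult_eq)
  moreover have "degree a \<noteq> 1" "degree b \<noteq> 1"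
    using root_of_degree_one[of a] root_of_degree_one[of b] assms(2) ab by auto
  ultimately have "degree a = 0 \<or> degree b = 0"
    by linarith
  with \<open>a \<noteq> 0\<close> \<open>b \<noteq> 0\<close> show "is_unit a \<or> is_unit b"
    by (auto simp: is_unit_iff_degree)
qed

lemma poly_eq_pCons_degree_le_2:
  "degree r \<le> 2 \<Longrightarrow> r = [:coeff r 0, coeff r 1, coeff r 2:]"
  by (intro poly_eqI) (auto simp: coeff_pCons coeff_eq_0 numeral_2_eq_2 split: nat.split)

lemma rat_degree_ge_3_of_square:
  fixes t :: "'a::field_char_0"
  assumes "rat_degree_ge 3 (t\<^sup>2)"
  shows "rat_degree_ge 3 t"
  unfolding rat_degree_ge_def
proof (intro allI impI)
  fix r :: "rat poly"
  assume rt: "poly (map_poly of_rat r) t = 0" and "degree r < 3"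
  define w v u where "w = coeff r 0" and "v = coeff r 1" and "u = coeff r 2"
  have r: "r = [:w, v, u:]"
    using \<open>degree r < 3\<close> poly_eq_pCons_degree_le_2[of r] by (simp add: w_def v_def u_def)
  define s where "s = [:w\<^sup>2, 2 * u * w - v\<^sup>2, u\<^sup>2:]"
  have "poly (map_poly of_rat s) (t\<^sup>2) =
      poly (map_poly of_rat r) t * poly (map_poly (of_rat :: rat \<Rightarrow> 'a) r) (- t)"
    by (simp add: r s_def map_poly_pCons of_rat_add of_rat_diff of_rat_mult of_rat_power
        algebra_simps power2_eq_square)
  then have "s = 0"
    using rt assms by (intro rat_degree_geD[of 3 "t\<^sup>2"]) (simp_all add: s_def)
  then show "r = 0"
    by (auto simp: s_def r)
qed

lemma rat_degree_ge_le_degree: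
  fixes g :: "rat poly"
  assumes "degree g \<noteq> 0" "\<And>z::complex. poly (map_poly of_rat g) z = 0 \<Longrightarrow> rat_degree_ge n z"
  shows "n \<le> degree g"
proof -
  have "\<not> constant (poly (map_poly (of_rat :: rat \<Rightarrow> complex) g))"
    using assms(1) by (simp add: constant_degree degree_map_poly)
  then obtain z :: complex where "poly (map_poly of_rat g) z = 0"
    using fundamental_theorem_of_algebra by blast
  moreover have "g \<noteq> 0"
    using assms(1) by auto
  ultimately show ?thesis
    using assms(2) rat_degree_geD by (meson not_le)
qed

definition p_poly :: "int \<Rightarrow> int \<Rightarrow> rat poly" where
  "p_poly l m = [:-1, of_int (l*m + l + m + 3), - of_int (l + m + 3), 1:]"

lemma degree_p_poly [simp]: "degree (p_poly l m) = 3"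
  by (simp add: p_poly_def)

lemma poly_map_p_poly:
  "poly (map_poly of_rat (p_poly l m)) y =
     y ^ 3 - of_int (l + m + 3) * y\<^sup>2 + of_int (l*m + l + m + 3) * y - (1 :: 'a::field_char_0)"
  by (simp add: p_poly_def map_poly_pCons of_rat_minus of_rat_add of_rat_diff of_rat_mult
      of_rat_of_int_eq algebra_simps power2_eq_square power3_eq_cube)

lemma poly_map_q_poly:
  "poly (map_poly of_rat (q_poly l m)) z =
     poly (map_poly of_rat (p_poly l m)) (z\<^sup>2 :: 'a::field_char_0)"
  by (simp add: q_poly_def poly_map_p_poly map_poly_pCons of_rat_minus of_rat_add of_rat_diff
      of_rat_mult of_rat_of_int_eq algebra_simps eval_nat_numeral)

lemma p_poly_no_rat_root:
  assumes "l > 0" "m > 0"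
  shows "poly (p_poly l m) x \<noteq> 0"
proof
  assume root: "poly (p_poly l m) x = 0"
  have "\<forall>i. coeff (p_poly l m) i \<in> \<int>"
    by (auto simp: p_poly_def coeff_pCons split: nat.split)
  with root have "algebraic_int x"
    by (intro algebraic_int.intros[of "p_poly l m"]) (simp_all add: p_poly_def)
  then obtain n where x: "x = of_int n"
    using rational_algebraic_int_is_int[of x] by (auto simp: Rats_def elim: Ints_cases)
  have "poly (p_poly l m) x = of_int (n ^ 3 - (l + m + 3) * n\<^sup>2 + (l*m + l + m + 3) * n - 1)"
    using poly_map_p_poly[of l m x] by (simp add: x)
  with root have eq: "n * (n\<^sup>2 - (l + m + 3) * n + (l*m + l + m + 3)) = 1"
    by (simp only: of_int_eq_0_iff) (simp add: algebra_simps power2_eq_square power3_eq_cube)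
  then have "is_unit n"
    by (metis dvd_triv_left)
  then have "n = 1 \<or> n = -1"
    by (auto simp: zdvd1_eq abs_eq_iff)
  with eq have "l * m = 0 \<or> l * m + 2 * l + 2 * m + 8 = 0"
    by (auto simp: algebra_simps)
  with mult_pos_pos[OF assms] assms show False
    by linarith
qed

lemma irreducible_p_poly:
  assumes "l > 0" "m > 0"
  shows "irreducible (p_poly l m)"
  using degree_p_poly p_poly_no_rat_root[OF assms] by (rule irreducible_cubic_if_no_root)

lemma rat_degree_ge_root_q_poly:
  assumes "l > 0" "m > 0" "poly (map_poly of_rat (q_poly l m)) t = 0"
  shows "rat_degree_ge 3 t"
proof (rule rat_degree_ge_3_of_square)
  have "poly (map_poly of_rat (p_poly l m)) (t\<^sup>2) = 0"
    using assms(3) by (simp add: poly_map_q_poly)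
  with rat_degree_ge_root_of_irreducible[OF irreducible_p_poly[OF assms(1,2)]]
  show "rat_degree_ge 3 (t\<^sup>2)"
    by simp
qed

lemma poly_map_of_rat_of_rat:
  "poly (map_poly of_rat p) (of_rat x :: 'a::field_char_0) = of_rat (poly p x)"
  by (induction p) (simp_all add: map_poly_pCons of_rat_add of_rat_mult)

lemma pcompose_linear_proportional:
  fixes g e :: "rat poly" and t :: "'a::field_char_0"
  assumes "rat_degree_ge n t" "degree g = n" "degree e = n" "\<beta> \<noteq> 0"
    and "poly (map_poly of_rat g) t = 0" "poly (map_poly of_rat e) (of_rat \<alpha> + of_rat \<beta> * t) = 0"
  shows "smult (lead_coeff g) (pcompose e [:\<alpha>, \<beta>:]) = smult (lead_coeff e * \<beta> ^ n) g"
proof -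
  define D where "D = smult (lead_coeff g) (pcompose e [:\<alpha>, \<beta>:]) - smult (lead_coeff e * \<beta> ^ n) g"
  have deg: "degree (pcompose e [:\<alpha>, \<beta>:]) = n"
    using assms(3,4) by (simp add: degree_pcompose)
  have lead: "coeff (pcompose e [:\<alpha>, \<beta>:]) n = lead_coeff e * \<beta> ^ n"
    using lead_coeff_comp[of "[:\<alpha>, \<beta>:]" e] assms(3,4) deg by simp
  have "degree D \<le> n"
    unfolding D_def using deg assms(2) by (intro degree_diff_le) (simp_all add: degree_smult_le)
  moreover have "coeff D n = 0"
    by (simp add: D_def lead assms(2))
  moreover have "poly (map_poly of_rat D) t = 0"
    using assms(5,6)
    by (simp add: D_def map_poly_of_rat_diff map_poly_of_rat_smult map_poly_of_rat_pcompose
        poly_pcompose map_poly_pCons mult.commute)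
  ultimately have "D = 0"
    using rat_degree_geD[OF assms(1)] by (metis le_neq_implies_less leading_coeff_0_iff)
  then show ?thesis
    by (simp add: D_def)
qed

lemma degree_0_if_pcompose_translation_eq:
  fixes p :: "'a::field_char_0 poly"
  assumes "pcompose p [:a, 1:] = p" "a \<noteq> 0"
  shows "degree p = 0"
proof -
  have step: "poly p (a + x) = poly p x" for x
    using arg_cong[OF assms(1), of "\<lambda>q. poly q x"] by (simp add: poly_pcompose)
  have multiples: "poly p (of_nat k * a) = poly p 0" for k
  proof (induction k)
    case (Suc k)
    then show ?case
      using step[of "of_nat k * a"] by (simp add: algebra_simps)
  qed simp
  define c where "c = p - [:poly p 0:]"
  have "range (\<lambda>k. of_nat k * a) \<subseteq> {x. poly c x = 0}"
    by (auto simp: c_def multiples)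
  moreover have "infinite (range (\<lambda>k::nat. of_nat k * a))"
    using assms(2) by (intro range_inj_infinite) (simp add: inj_def)
  ultimately have "c = 0"
    using poly_roots_finite finite_subset by blast
  then show ?thesis
    by (metis c_def degree_pCons_0 eq_iff_diff_eq_0)
qed

lemma odd_power_eq_1_imp:
  fixes x :: "'a::linordered_idom"
  assumes "odd n" "x ^ n = 1"
  shows "x = 1"
  using assms
  by (metis less_numeral_extra(1) not_less_iff_gr_or_eq odd_pos one_less_power
      order.strict_iff_order power_less_one_iff zero_less_power_eq)

lemma affine_root_map_trivial:
  fixes g :: "rat poly" and t :: "'a::field_char_0"
  assumes "rat_degree_ge n t" "odd n" "degree g = n" "\<And>x. poly g x \<noteq> 0" "\<beta> \<noteq> 0"
    and "poly (map_poly of_rat g) t = 0" "poly (map_poly of_rat g) (of_rat \<alpha> + of_rat \<beta> * t) = 0"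
  shows "\<alpha> = 0 \<and> \<beta> = 1"
proof -
  have "g \<noteq> 0"
    using assms(2,3) by auto
  have "smult (lead_coeff g) (pcompose g [:\<alpha>, \<beta>:]) =
      smult (lead_coeff g) (smult (\<beta> ^ n) g)"
    using pcompose_linear_proportional[OF assms(1,3,3,5,6,7)] by simp
  then have gL: "pcompose g [:\<alpha>, \<beta>:] = smult (\<beta> ^ n) g"
    by (rule smult_cancel[rotated]) (simp add: \<open>g \<noteq> 0\<close>)
  have \<beta>: "\<beta> = 1"
  proof (rule ccontr)
    assume "\<beta> \<noteq> 1"
    define c where "c = \<alpha> / (1 - \<beta>)"
    have "poly [:\<alpha>, \<beta>:] c = c"
      using \<open>\<beta> \<noteq> 1\<close> by (simp add: c_def field_simps)
    then have "poly g c = \<beta> ^ n * poly g c"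
      using arg_cong[OF gL, of "\<lambda>p. poly p c"] by (simp add: poly_pcompose)
    then have "\<beta> ^ n = 1"
      using assms(4)[of c] by simp
    with \<open>odd n\<close> \<open>\<beta> \<noteq> 1\<close> show False
      using odd_power_eq_1_imp by blast
  qed
  have "\<alpha> = 0"
  proof (rule ccontr)
    assume "\<alpha> \<noteq> 0"
    with gL \<beta> have "degree g = 0"
      by (intro degree_0_if_pcompose_translation_eq) simp_all
    with assms(2,3) show False
      by simp
  qed
  with \<beta> show ?thesis
    by simp
qed

lemma root_0_if_affine_pair_of_roots:
  fixes g h :: "rat poly" and t :: "'a::field_char_0"
  assumes "rat_degree_ge n t" "odd n" "degree g = n" "degree h = n" "\<beta> \<noteq> 0"
    and "poly (map_poly of_rat g) t = 0"
    and "poly (map_poly of_rat h) (of_rat \<alpha> + of_rat \<beta> * t) = 0"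
    and "poly (map_poly of_rat h) (- (of_rat \<alpha> + of_rat \<beta> * t)) = 0"
  shows "poly h 0 = 0"
proof -
  have "poly (map_poly of_rat h) (of_rat (- \<alpha>) + of_rat (- \<beta>) * t) = 0"
    using assms(8) by (simp add: of_rat_minus)
  (* the signs differ because (- beta) ^ n = - beta ^ n for odd n *)
  from pcompose_linear_proportional[OF assms(1,3,4,5,6,7)]
    and pcompose_linear_proportional[OF assms(1,3,4) _ assms(6) this]
  have plus: "smult (lead_coeff g) (pcompose h [:\<alpha>, \<beta>:]) = smult (lead_coeff h * \<beta> ^ n) g"
    and minus: "smult (lead_coeff g) (pcompose h [:- \<alpha>, - \<beta>:]) = - smult (lead_coeff h * \<beta> ^ n) g"
    using assms(2,5) by simp_all
  define z where "z = - \<alpha> / \<beta>"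
  have "poly [:\<alpha>, \<beta>:] z = 0" "poly [:- \<alpha>, - \<beta>:] z = 0"
    using assms(5) by (simp_all add: z_def field_simps)
  then have hz: "poly (pcompose h [:\<alpha>, \<beta>:]) z = poly h 0"
      "poly (pcompose h [:- \<alpha>, - \<beta>:]) z = poly h 0"
    by (simp_all only: poly_pcompose)
  have "lead_coeff g * poly h 0 = lead_coeff h * \<beta> ^ n * poly g z"
    using arg_cong[OF plus, of "\<lambda>p. poly p z"] hz(1) by simp
  moreover have "lead_coeff g * poly h 0 = - (lead_coeff h * \<beta> ^ n * poly g z)"
    using arg_cong[OF minus, of "\<lambda>p. poly p z"] hz(2) by simp
  ultimately have "lead_coeff g * poly h 0 = 0"
    by simp
  moreover have "g \<noteq> 0"
    using assms(2,3) by auto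
  ultimately show ?thesis
    by simp
qed

lemma affine_image_of_root_plus_minus:
  fixes g h :: "rat poly" and s t :: "'a::field_char_0"
  assumes "odd n" "1 < n" "degree g = n" "degree h = n"
    and roots: "\<And>z :: 'a. poly (map_poly of_rat (g * h)) z = 0 \<Longrightarrow> rat_degree_ge n z"
    and "poly (g * h) 0 \<noteq> 0" "\<beta> \<noteq> 0"
    and "poly (map_poly of_rat g) t = 0" and s: "s = of_rat \<alpha> + of_rat \<beta> * t"
    and "poly (map_poly of_rat (g * h)) s = 0" "poly (map_poly of_rat (g * h)) (- s) = 0"
  shows "s = t \<or> s = - t"
proof -
  have t: "rat_degree_ge n t"
    using assms(8) by (intro roots) (simp add: map_poly_of_rat_mult)
  have no_rat_root: "poly g x \<noteq> 0" for x
  proof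
    assume "poly g x = 0"
    then have "poly (map_poly of_rat (g * h)) (of_rat x :: 'a) = 0"
      by (simp add: poly_map_of_rat_of_rat)
    with roots rat_degree_ge_not_rational \<open>1 < n\<close> show False
      by blast
  qed
  have minus_s: "- s = of_rat (- \<alpha>) + of_rat (- \<beta>) * t"
    using s by (simp add: of_rat_minus)
  consider "poly (map_poly of_rat g) s = 0" | "poly (map_poly of_rat g) (- s) = 0"
    | "poly (map_poly of_rat h) s = 0" "poly (map_poly of_rat h) (- s) = 0"
    using assms(10,11) by (auto simp: map_poly_of_rat_mult)
  then show ?thesis
  proof cases
    case 1
    then have "\<alpha> = 0 \<and> \<beta> = 1"
      unfolding s by (rule affine_root_map_trivial[OF t assms(1,3) no_rat_root assms(7,8)])
    with s show ?thesis
      by simp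
  next
    case 2
    then have "- \<alpha> = 0 \<and> - \<beta> = 1"
      unfolding minus_s using assms(7)
      by (intro affine_root_map_trivial[OF t assms(1,3) no_rat_root _ assms(8)]) simp_all
    with s show ?thesis
      by simp
  next
    case 3
    then have "poly h 0 = 0"
      unfolding s by (rule root_0_if_affine_pair_of_roots[OF t assms(1,3,4,7,8)])
    with assms(6) show ?thesis
      by simp
  qed
qed

lemma q_poly_cubic_factors:
  assumes "l > 0" "m > 0" "\<not> irreducible (q_poly l m)"
  obtains g h where "q_poly l m = g * h" "degree g = 3" "degree h = 3"
proof -
  have "q_poly l m \<noteq> 0" "\<not> is_unit (q_poly l m)"
    by (simp_all add: q_poly_def is_unit_poly_iff)
  with assms(3) obtain g h where gh: "q_poly l m = g * h" "\<not> is_unit g" "\<not> is_unit h"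
    unfolding irreducible_def by blast
  with \<open>q_poly l m \<noteq> 0\<close> have "g \<noteq> 0" "h \<noteq> 0"
    by auto
  have roots: "rat_degree_ge 3 z"
    if "poly (map_poly of_rat g) z = 0 \<or> poly (map_poly of_rat h) z = 0" for z :: complex
    using that gh(1) by (intro rat_degree_ge_root_q_poly[OF assms(1,2)]) (auto simp: map_poly_of_rat_mult)
  have "3 \<le> degree g" "3 \<le> degree h"
    using gh(2,3) \<open>g \<noteq> 0\<close> \<open>h \<noteq> 0\<close> roots
    by (auto intro!: rat_degree_ge_le_degree simp: is_unit_iff_degree)
  moreover have "degree (q_poly l m) = 6"
    by (simp add: q_poly_def)
  then have "degree g + degree h = 6"
    using degree_mult_eq[OF \<open>g \<noteq> 0\<close> \<open>h \<noteq> 0\<close>] gh(1) by simp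
  ultimately show ?thesis
    using that gh(1) by simp
qed

lemma q_poly_affine_root_relation:
  fixes s t :: complex
  assumes "l > 0" "m > 0" "\<not> irreducible (q_poly l m)" "\<beta> \<noteq> 0"
    and "poly (map_poly of_rat (q_poly l m)) t = 0" "poly (map_poly of_rat (q_poly l m)) s = 0"
    and "s = of_rat \<alpha> + of_rat \<beta> * t"
  shows "s = t \<or> s = - t"
proof -
  obtain g h where gh: "q_poly l m = g * h" "degree g = 3" "degree h = 3"
    using q_poly_cubic_factors[OF assms(1-3)] .
  then have hg: "q_poly l m = h * g"
    by (simp add: mult.commute)
  note roots = rat_degree_ge_root_q_poly[OF assms(1,2)]
  have q0: "poly (q_poly l m) 0 \<noteq> 0"
    by (simp add: q_poly_def)
  have q_minus_s: "poly (map_poly of_rat (q_poly l m)) (- s) = 0"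
    using assms(6) by (simp add: poly_map_q_poly)
  consider "poly (map_poly of_rat g) t = 0" | "poly (map_poly of_rat h) t = 0"
    using assms(5) gh(1) by (auto simp: map_poly_of_rat_mult)
  then show ?thesis
  proof cases
    case 1
    show ?thesis
      using affine_image_of_root_plus_minus[OF _ _ gh(2,3), unfolded gh(1)[symmetric],
          OF _ _ roots q0 assms(4) 1 assms(7,6) q_minus_s]
      by simp
  next
    case 2
    show ?thesis
      using affine_image_of_root_plus_minus[OF _ _ gh(3,2), unfolded hg[symmetric],
          OF _ _ roots q0 assms(4) 2 assms(7,6) q_minus_s]
      by simp
  qed
qed

lemma card_roots_q_poly:
  assumes "l > 0" "m > 0"
  shows "6 \<le> card {z :: complex. poly (map_poly of_rat (q_poly l m)) z = 0}"
proof -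
  let ?P = "\<lambda>y :: real. poly (map_poly of_rat (p_poly l m)) y"
  have P: "?P 0 < 0" "?P 1 > 0" "?P (of_int l + 1) < 0" "?P (of_int (l + m + 4)) > 0"
    using assms by (simp_all add: poly_map_p_poly algebra_simps power2_eq_square power3_eq_cube
        add_pos_pos)
  obtain y1 where "0 < y1" "y1 < 1" "?P y1 = 0"
    using poly_IVT_pos[OF _ P(1,2)] by auto
  moreover obtain y2 where "1 < y2" "y2 < of_int l + 1" "?P y2 = 0"
    using poly_IVT_neg[OF _ P(2,3)] assms by auto
  moreover obtain y3 where "of_int l + 1 < y3" "?P y3 = 0"
    using poly_IVT_pos[OF _ P(3,4)] assms by auto
  ultimately have y: "?P y1 = 0" "?P y2 = 0" "?P y3 = 0"
    and sqrt_y: "0 < sqrt y1" "sqrt y1 < sqrt y2" "sqrt y2 < sqrt y3"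
    by auto
  define R where "R = {sqrt y1, sqrt y2, sqrt y3, - sqrt y1, - sqrt y2, - sqrt y3}"
  have "card {a, b, c, - a, - b, - c} = 6" if "0 < a" "a < b" "b < c" for a b c :: real
    using that by (simp add: card_insert_if)
  with sqrt_y have "card R = 6"
    unfolding R_def by blast
  have "poly (map_poly of_rat (q_poly l m)) (complex_of_real x) = 0" if "x \<in> R" for x
  proof -
    have "x\<^sup>2 \<in> {y1, y2, y3}"
      using that sqrt_y by (auto simp: R_def)
    then have "poly (map_poly of_rat (q_poly l m)) x = 0"
      using y by (auto simp: poly_map_q_poly)
    moreover have "poly (map_poly of_rat (q_poly l m)) (complex_of_real x) =
        of_real (poly (map_poly of_rat (q_poly l m)) x)"
      by (simp add: poly_map_q_poly poly_map_p_poly)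
    ultimately show ?thesis
      by simp
  qed
  then have "complex_of_real ` R \<subseteq> {z. poly (map_poly of_rat (q_poly l m)) z = 0}"
    by auto
  moreover have "finite {z :: complex. poly (map_poly of_rat (q_poly l m)) z = 0}"
    by (intro poly_roots_finite) (simp add: q_poly_def map_poly_pCons)
  ultimately have "card (complex_of_real ` R) \<le>
      card {z :: complex. poly (map_poly of_rat (q_poly l m)) z = 0}"
    by (rule card_mono[rotated])
  then show ?thesis
    using \<open>card R = 6\<close> by (simp add: card_image inj_on_def)
qed

lemma q_poly_root_ne_plus_minus:
  fixes \<theta>1 \<theta>2 \<theta>3 :: complex
  assumes "l > 0" "m > 0"
    and roots: "{z. poly (map_poly of_rat (q_poly l m)) z = 0} = {\<theta>1, -\<theta>1, \<theta>2, -\<theta>2, \<theta>3, -\<theta>3}"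
  shows "\<theta>2 \<noteq> \<theta>1" "\<theta>2 \<noteq> - \<theta>1"
proof -
  have "card {\<theta>1, -\<theta>1, \<theta>2, -\<theta>2, \<theta>3, -\<theta>3} \<le> 4" if "\<theta>2 = \<theta>1 \<or> \<theta>2 = - \<theta>1"
    using that card_length[of "[\<theta>1, -\<theta>1, \<theta>3, -\<theta>3]"] by (auto simp: insert_commute)
  with card_roots_q_poly[OF assms(1,2)] roots show "\<theta>2 \<noteq> \<theta>1" "\<theta>2 \<noteq> - \<theta>1"
    by auto
qed

theorem lemma2p1:
  fixes l m :: int and \<theta>1 \<theta>2 \<theta>3 :: complex
  assumes "l > 0" and "m > 0"
    and roots: "{z. poly (map_poly of_rat (q_poly l m)) z = 0} = {\<theta>1, -\<theta>1, \<theta>2, -\<theta>2, \<theta>3, -\<theta>3}"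
    and red: "\<not> irreducible (q_poly l m)"
  shows "\<forall>a b c :: rat. of_rat a + of_rat b * \<theta>1 + of_rat c * \<theta>2 = 0 \<longrightarrow> a = 0 \<and> b = 0 \<and> c = 0"
proof (intro allI impI)
  fix a b c :: rat
  assume rel: "of_rat a + of_rat b * \<theta>1 + of_rat c * \<theta>2 = 0"
  have \<theta>: "poly (map_poly of_rat (q_poly l m)) \<theta>1 = 0" "poly (map_poly of_rat (q_poly l m)) \<theta>2 = 0"
    using roots by auto
  note rat_degree = rat_degree_ge_root_q_poly[OF assms(1,2)]
  show "a = 0 \<and> b = 0 \<and> c = 0"
  proof (cases "c = 0")
    case True
    with rel have "poly (map_poly of_rat [:a, b:]) \<theta>1 = 0"
      by (simp add: map_poly_pCons mult.commute)
    with rat_degree[OF \<theta>(1)] have "[:a, b:] = 0"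
      by (rule rat_degree_geD) simp
    with True show ?thesis
      by simp
  next
    case False
    define \<alpha> \<beta> where "\<alpha> = - a / c" and "\<beta> = - b / c"
    from rel have "of_rat c * \<theta>2 = - (of_rat a + of_rat b * \<theta>1)"
      by (simp only: add_eq_0_iff)
    with False have \<theta>2: "\<theta>2 = of_rat \<alpha> + of_rat \<beta> * \<theta>1"
      by (simp add: \<alpha>_def \<beta>_def of_rat_divide of_rat_minus field_simps)
    moreover have "\<beta> \<noteq> 0"
      using \<theta>2 rat_degree_ge_not_rational[OF rat_degree[OF \<theta>(2)]] by force
    ultimately have "\<theta>2 = \<theta>1 \<or> \<theta>2 = - \<theta>1"
      using q_poly_affine_root_relation[OF assms(1,2) red _ \<theta>] by blast
    with q_poly_root_ne_plus_minus[OF assms(1,2) roots] show ?thesis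
      by blast
  qed
qed

end
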